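(* Let $T$ be an $\mathcal O$-operator on a Lie algebra $\mathfrak g$ with respect to a representation $(V;\rho)$ and let $T_t=\sum_{i=0}^n\tau_it^i$ be an order $n$ deformation of $T$. Define $\mathrm{Ob}\in\mathrm{Hom}(\wedge^2V,\mathfrak g)$ by $$\mathrm{Ob}(u,v)=\sum_{i+j=n+1,\ i,j\ge1}\Big([\tau_i(u),\tau_j(v)]-\tau_i\big(\rho(\tau_j(u))(v)-\rho(\tau_j(v))(u)\big)\Big).$$ Then $\mathrm{Ob}$ is a $2$-cocycle, i.e. $d_{\bar\rho}\mathrm{Ob}=0$.
   Context: An $\mathcal O$-operator: linear $T:V\to\mathfrak g$ with $[Tu,Tv]=T(\rho(Tu)(v)-\rho(Tv)(u))$. An order $n$ deformation of $T$ is $T_t=\sum_{i=0}^n\tau_it^i$ with $\tau_0=T$, $\tau_i\in\mathrm{Hom}(V,\mathfrak g)$, such that $[T_t(u),T_t(v)]=T_t(\rho(T_t(u))(v)-\rho(T_t(v))(u))$ in $\mathfrak g[[t]]/(t^{n+1})$, equivalently $\sum_{k+l=i,\,k,l\ge0}([\tau_ku,\tau_lv]-\tau_k(\rho(\tau_lu)(v)-\rho(\tau_lv)(u)))=0$ for $0\le i\le n$. With $[u,v]_T=\rho(Tu)(v)-\rho(Tv)(u)$, the coboundary $d_{\bar\rho}:\mathrm{Hom}(\wedge^kV,\mathfrak g)\to\mathrm{Hom}(\wedge^{k+1}V,\mathfrak g)$ is $d_{\bar\rho}f(u_1,\dots,u_{k+1})=\sum_{i}(-1)^{i+1}[Tu_i,f(\dots,\hat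 u_i,\dots)]+\sum_i(-1)^{i+1}T\rho(f(\dots,\hat u_i,\dots))(u_i)+\sum_{i<j}(-1)^{i+j}f([u_i,u_j]_T,u_1,\dots,\hat u_i,\dots,\hat u_j,\dots,u_{k+1})$. *)

theory Defs
  imports Complex_Main
begin

text \<open>Vector spaces over an abstract field 'k, given by explicit scalar multiplications
  (locale vector_space of HOL.Vector_Spaces). Linear maps are Vector_Spaces.linear.\<close>

definition lie_algebra :: "('k::field \<Rightarrow> 'g::ab_group_add \<Rightarrow> 'g) \<Rightarrow> ('g \<Rightarrow> 'g \<Rightarrow> 'g) \<Rightarrow> bool" where
  "lie_algebra sg br \<longleftrightarrow>
     vector_space sg \<and>
     (\<forall>x. Vector_Spaces.linear sg sg (br x)) \<and>
     (\<forall>y. Vector_Spaces.linear sg sg (\<lambda>x. br x y)) \<and>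
     (\<forall>x. br x x = 0) \<and>
     (\<forall>x y z. br x (br y z) + br y (br z x) + br z (br x y) = 0)"

definition lie_representation ::
  "('k::field \<Rightarrow> 'g::ab_group_add \<Rightarrow> 'g) \<Rightarrow> ('k \<Rightarrow> 'v::ab_group_add \<Rightarrow> 'v) \<Rightarrow>
   ('g \<Rightarrow> 'g \<Rightarrow> 'g) \<Rightarrow> ('g \<Rightarrow> 'v \<Rightarrow> 'v) \<Rightarrow> bool" where
  "lie_representation sg sv br \<rho> \<longleftrightarrow>
     lie_algebra sg br \<and> vector_space sv \<and>
     (\<forall>x. Vector_Spaces.linear sv sv (\<rho> x)) \<and>
     (\<forall>w. Vector_Spaces.linear sg sv (\<lambda>x. \<rho> x w)) \<and>
     (\<forall>x y w. \<rho> (br x y) w = \<rho> x (\<rho> y w) - \<rho> y (\<rho> x w))"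

definition O_operator ::
  "('k::field \<Rightarrow> 'g::ab_group_add \<Rightarrow> 'g) \<Rightarrow> ('k \<Rightarrow> 'v::ab_group_add \<Rightarrow> 'v) \<Rightarrow>
   ('g \<Rightarrow> 'g \<Rightarrow> 'g) \<Rightarrow> ('g \<Rightarrow> 'v \<Rightarrow> 'v) \<Rightarrow> ('v \<Rightarrow> 'g) \<Rightarrow> bool" where
  "O_operator sg sv br \<rho> T \<longleftrightarrow>
     Vector_Spaces.linear sv sg T \<and>
     (\<forall>u v. br (T u) (T v) = T (\<rho> (T u) v - \<rho> (T v) u))"

text \<open>Order n deformation T_t = sum_{i=0}^n tau_i t^i (only tau 0 .. tau n matter).\<close>
definition order_deformation ::
  "('k::field \<Rightarrow> 'g::ab_group_add \<Rightarrow> 'g) \<Rightarrow> ('k \<Rightarrow> 'v::ab_group_add \<Rightarrow> 'v) \<Rightarrow>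
   ('g \<Rightarrow> 'g \<Rightarrow> 'g) \<Rightarrow> ('g \<Rightarrow> 'v \<Rightarrow> 'v) \<Rightarrow> ('v \<Rightarrow> 'g) \<Rightarrow> nat \<Rightarrow> (nat \<Rightarrow> 'v \<Rightarrow> 'g) \<Rightarrow> bool" where
  "order_deformation sg sv br \<rho> T n \<tau> \<longleftrightarrow>
     \<tau> 0 = T \<and>
     (\<forall>i\<le>n. Vector_Spaces.linear sv sg (\<tau> i)) \<and>
     (\<forall>i\<le>n. \<forall>u v. (\<Sum>k\<in>{0..i}. br (\<tau> k u) (\<tau> (i - k) v)
                    - \<tau> k (\<rho> (\<tau> (i - k) u) v - \<rho> (\<tau> (i - k) v) u)) = 0)"

definition obstruction ::
  "('g::ab_group_add \<Rightarrow> 'g \<Rightarrow> 'g) \<Rightarrow> ('g \<Rightarrow> 'v::ab_group_add \<Rightarrow> 'v) \<Rightarrow> nat \<Rightarrow> (nat \<Rightarrow> 'v \<Rightarrow> 'g) \<Rightarrow> 'v \<Rightarrow> 'v \<Rightarrow> 'g" where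
  "obstruction br \<rho> n \<tau> u v =
     (\<Sum>i\<in>{1..n}. br (\<tau> i u) (\<tau> (n + 1 - i) v)
        - \<tau> i (\<rho> (\<tau> (n + 1 - i) u) v - \<rho> (\<tau> (n + 1 - i) v) u))"

definition T_bracket :: "('g \<Rightarrow> 'v::ab_group_add \<Rightarrow> 'v) \<Rightarrow> ('v \<Rightarrow> 'g) \<Rightarrow> 'v \<Rightarrow> 'v \<Rightarrow> 'v" where
  "T_bracket \<rho> T u v = \<rho> (T u) v - \<rho> (T v) u"

text \<open>The coboundary d_rhobar on 2-cochains, written out from the general formula (k = 2).\<close>
definition coboundary2 ::
  "('g::ab_group_add \<Rightarrow> 'g \<Rightarrow> 'g) \<Rightarrow> ('g \<Rightarrow> 'v::ab_group_add \<Rightarrow> 'v) \<Rightarrow> ('v \<Rightarrow> 'g) \<Rightarrow>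
   ('v \<Rightarrow> 'v \<Rightarrow> 'g) \<Rightarrow> 'v \<Rightarrow> 'v \<Rightarrow> 'v \<Rightarrow> 'g" where
  "coboundary2 br \<rho> T f u1 u2 u3 =
       br (T u1) (f u2 u3) - br (T u2) (f u1 u3) + br (T u3) (f u1 u2)
     + T (\<rho> (f u2 u3) u1) - T (\<rho> (f u1 u3) u2) + T (\<rho> (f u1 u2) u3)
     - f (T_bracket \<rho> T u1 u2) u3 + f (T_bracket \<rho> T u1 u3) u2 - f (T_bracket \<rho> T u2 u3) u1"

end

(*
  Let V[[t]] and g[[t]] be the formal power series over V and g: with the Cauchy product of
  bracket and action they again form a Lie ring and a module, and T_t extends to an additive map
  A = sum_i tau_i t^i between them. For every additive map A, the defect of the O-operator identity,
  Phi(u, v) = [A u, A v] - A [u, v]_A, satisfies d_A Phi = 0: this only uses the Jacobi identity and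
  the representation property. On constant series the coefficient of t^k in Phi(u, v) is the
  order-k deformation equation, which vanishes for k <= n, and for k = n + 1 it is Ob(u, v) once
  tau is truncated above n. Hence in the coefficient of t^(n+1) of d_A Phi = 0 only the constant
  term T of A survives, and it reads d Ob = 0. No scalars are involved, so everything is stated
  for Lie rings and their modules.
*)
theory Submission
  imports Defs "HOL-Library.Function_Algebras"
begin

locale lie_ring_module =
  fixes br :: "'g::ab_group_add \<Rightarrow> 'g \<Rightarrow> 'g" and \<rho> :: "'g \<Rightarrow> 'v::ab_group_add \<Rightarrow> 'v"
  assumes br_add_left: "br (x + y) z = br x z + br y z"
    and br_add_right: "br x (y + z) = br x y + br x z"
    and br_anticomm: "br x y = - br y x"
    and jacobi: "br x (br y z) + br y (br z x) + br z (br x y) = 0"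
    and action_add_left: "\<rho> (x + y) w = \<rho> x w + \<rho> y w"
    and action_add_right: "\<rho> x (w + w') = \<rho> x w + \<rho> x w'"
    and action_bracket: "\<rho> (br x y) w = \<rho> x (\<rho> y w) - \<rho> y (\<rho> x w)"
begin

lemma additive_br_left: "additive (\<lambda>x. br x z)"
  by standard (rule br_add_left)

lemma additive_br_right: "additive (br x)"
  by standard (rule br_add_right)

lemma additive_action_left: "additive (\<lambda>x. \<rho> x w)"
  by standard (rule action_add_left)

lemma additive_action_right: "additive (\<rho> x)"
  by standard (rule action_add_right)

lemmas br_diff_left = additive.diff[OF additive_br_left]
  and br_minus_left = additive.minus[OF additive_br_left]
  and br_zero_left = additive.zero[OF additive_br_left]
  and br_diff_right = additive.diff[OF additive_br_right]
  and br_minus_right = additive.minus[OF additive_br_right]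
  and br_zero_right = additive.zero[OF additive_br_right]
  and action_diff_left = additive.diff[OF additive_action_left]
  and action_zero_left = additive.zero[OF additive_action_left]
  and action_diff_right = additive.diff[OF additive_action_right]
  and action_zero_right = additive.zero[OF additive_action_right]

end

lemma lie_representation_imp_lie_ring_module:
  assumes "lie_representation sg sv br \<rho>"
  shows "lie_ring_module br \<rho>"
proof -
  have lie: "lie_algebra sg br"
    using assms by (simp add: lie_representation_def)
  have br_add_left: "br (x + y) z = br x z + br y z"
    and br_add_right: "br x (y + z) = br x y + br x z"
    and alternating: "br x x = 0" for x y z
    using lie unfolding lie_algebra_def Vector_Spaces.linear_iff by blast+
  have "br x y + br y x = 0" for x y
  proof -
    have "0 = br (x + y) (x + y)"
      by (simp only: alternating)
    also have "\<dots> = br x y + br y x"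
      unfolding br_add_left br_add_right by (simp add: alternating)
    finally show ?thesis by (rule sym)
  qed
  then have br_anticomm: "br x y = - br y x" for x y
    by (simp add: eq_neg_iff_add_eq_0)
  have jacobi: "br x (br y z) + br y (br z x) + br z (br x y) = 0" for x y z
    using lie unfolding lie_algebra_def by blast
  have action_add_left: "\<rho> (x + y) w = \<rho> x w + \<rho> y w"
    and action_add_right: "\<rho> x (w + w') = \<rho> x w + \<rho> x w'"
    and action_bracket: "\<rho> (br x y) w = \<rho> x (\<rho> y w) - \<rho> y (\<rho> x w)" for x y w w'
    using assms unfolding lie_representation_def Vector_Spaces.linear_iff by blast+
  show ?thesis
    by unfold_locales (rule br_add_left br_add_right br_anticomm jacobi
        action_add_left action_add_right action_bracket)+
qed

definition triangle_sum :: "nat \<Rightarrow> (nat \<Rightarrow> nat \<Rightarrow> nat \<Rightarrow> 'a::comm_monoid_add) \<Rightarrow> 'a" where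
  "triangle_sum k H = (\<Sum>(i, j)\<in>{(i, j). i + j \<le> k}. H i j (k - i - j))"

lemma triangle_sum_nested_left: "(\<Sum>i\<le>k. \<Sum>j\<le>k - i. H i j (k - i - j)) = triangle_sum k H"
proof -
  have "{(i, j). i + j \<le> k} = Sigma {..k} (\<lambda>i. {..k - i})" by auto
  then show ?thesis
    unfolding triangle_sum_def by (simp add: sum.Sigma)
qed

lemma triangle_sum_nested_right: "(\<Sum>m\<le>k. \<Sum>i\<le>m. H i (m - i) (k - m)) = triangle_sum k H"
proof -
  have "triangle_sum k H = (\<Sum>m\<le>k. \<Sum>i\<le>m. H i (m - i) (k - i - (m - i)))"
    unfolding triangle_sum_def by (rule sum.triangle_reindex_eq)
  also have "\<dots> = (\<Sum>m\<le>k. \<Sum>i\<le>m. H i (m - i) (k - m))"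
    by (intro sum.cong refl) auto
  finally show ?thesis by simp
qed

lemma triangle_sum_rotate: "triangle_sum k H = triangle_sum k (\<lambda>a b c. H c a b)"
  unfolding triangle_sum_def
  by (rule sum.reindex_bij_witness[where i="\<lambda>(c, d). (k - c - d, c)" and j="\<lambda>(a, b). (b, k - a - b)"])
    auto

lemma triangle_sum_swap: "triangle_sum k H = triangle_sum k (\<lambda>a b c. H b a c)"
  unfolding triangle_sum_def
  by (rule sum.reindex_bij_witness[where i="\<lambda>(c, d). (d, c)" and j="\<lambda>(a, b). (b, a)"])
    (auto simp: add.commute)

lemma triangle_sum_add: "triangle_sum k H + triangle_sum k G = triangle_sum k (\<lambda>a b c. H a b c + G a b c)"
  unfolding triangle_sum_def by (simp add: sum.distrib case_prod_beta)

lemma triangle_sum_diff: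
  fixes H G :: "nat \<Rightarrow> nat \<Rightarrow> nat \<Rightarrow> 'a::ab_group_add"
  shows "triangle_sum k H - triangle_sum k G = triangle_sum k (\<lambda>a b c. H a b c - G a b c)"
  unfolding triangle_sum_def by (simp add: sum_subtractf case_prod_beta)

definition const_series :: "'a::zero \<Rightarrow> nat \<Rightarrow> 'a"
  where "const_series w k = (if k = 0 then w else 0)"

text \<open>Sequences \<open>nat \<Rightarrow> 'a\<close> stand for formal power series; \<open>convolution f\<close> is the
  Cauchy product induced by a biadditive \<open>f\<close>.\<close>

definition convolution :: "('a \<Rightarrow> 'b \<Rightarrow> 'c::comm_monoid_add) \<Rightarrow> (nat \<Rightarrow> 'a) \<Rightarrow> (nat \<Rightarrow> 'b) \<Rightarrow> nat \<Rightarrow> 'c"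
  where "convolution f X Y k = (\<Sum>i\<le>k. f (X i) (Y (k - i)))"

lemma convolution_convolution_right:
  assumes "\<And>i. additive (f (X i))"
  shows "convolution f X (convolution g Y Z) k = triangle_sum k (\<lambda>i j l. f (X i) (g (Y j) (Z l)))"
  unfolding convolution_def triangle_sum_nested_left[symmetric] by (simp add: additive.sum[OF assms])

lemma convolution_convolution_left:
  assumes "\<And>z. additive (\<lambda>x. f x z)"
  shows "convolution f (convolution g X Y) Z k = triangle_sum k (\<lambda>i j l. f (g (X i) (Y j)) (Z l))"
  unfolding convolution_def triangle_sum_nested_right[symmetric]
  by (simp add: additive.sum[OF assms, where g="\<lambda>i. g (X i) (Y (_ - i))"])

lemma convolution_add_right:
  assumes "\<And>i. additive (f (X i))"
  shows "convolution f X (Y + Z) = convolution f X Y + convolution f X Z"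
  by (rule ext) (simp add: convolution_def additive.add[OF assms] sum.distrib)

lemma convolution_add_left:
  assumes "\<And>z. additive (\<lambda>x. f x z)"
  shows "convolution f (X + Y) Z = convolution f X Z + convolution f Y Z"
  by (rule ext) (simp add: convolution_def additive.add[OF assms] sum.distrib)

lemma additive_convolution:
  assumes "\<And>i. additive (f (X i))"
  shows "additive (convolution f X)"
  by standard (rule convolution_add_right, rule assms)

lemma convolution_anticomm:
  fixes f :: "'a \<Rightarrow> 'a \<Rightarrow> 'b::ab_group_add"
  assumes "\<And>x y. f x y = - f y x"
  shows "convolution f X Y = - convolution f Y X"
proof (rule ext)
  fix k
  have "convolution f Y X k = (\<Sum>i\<le>k. f (Y (k - i)) (X (k - (k - i))))"
    unfolding convolution_def
    by (rule sum.reindex_bij_witness[where i="\<lambda>i. k - i" and j="\<lambda>i. k - i"]) auto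
  also have "\<dots> = (\<Sum>i\<le>k. - f (X i) (Y (k - i)))"
    by (intro sum.cong refl) (simp add: assms[of "Y _"])
  also have "\<dots> = - convolution f X Y k"
    by (simp add: convolution_def sum_negf)
  finally show "convolution f X Y k = (- convolution f Y X) k" by simp
qed

lemma convolution_const_series_right:
  assumes "\<And>k. f (X k) 0 = 0"
  shows "convolution f X (const_series w) = (\<lambda>k. f (X k) w)"
proof (rule ext)
  fix k
  have "convolution f X (const_series w) k = (\<Sum>i\<le>k. if i = k then f (X i) w else 0)"
    unfolding convolution_def const_series_def by (intro sum.cong refl) (auto simp: assms)
  then show "convolution f X (const_series w) k = f (X k) w" by simp
qed

lemma convolution_const_series_left:
  assumes "\<And>k. f 0 (Y k) = 0"
  shows "convolution f (const_series v) Y = (\<lambda>k. f v (Y k))"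
proof (rule ext)
  fix k
  have "convolution f (const_series v) Y k = (\<Sum>i\<le>k. if i = 0 then f v (Y k) else 0)"
    unfolding convolution_def const_series_def by (intro sum.cong refl) (auto simp: assms)
  then show "convolution f (const_series v) Y k = f v (Y k)" by simp
qed

lemma convolution_vanishing_below:
  assumes "\<And>k. k < m \<Longrightarrow> Y k = 0" and "\<And>k. f (X k) 0 = 0"
  shows "convolution f X Y m = f (X 0) (Y m)"
proof -
  have "convolution f X Y m = (\<Sum>i\<le>m. if i = 0 then f (X 0) (Y m) else 0)"
    unfolding convolution_def by (intro sum.cong refl) (auto simp: assms)
  then show ?thesis by simp
qed

lemma (in lie_ring_module) lie_ring_module_convolution:
  "lie_ring_module (convolution br) (convolution \<rho>)"
proof
  fix X Y Z :: "nat \<Rightarrow> 'g" and W W' :: "nat \<Rightarrow> 'v"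
  show "convolution br (X + Y) Z = convolution br X Z + convolution br Y Z"
    by (rule convolution_add_left) (rule additive_br_left)
  show "convolution br X (Y + Z) = convolution br X Y + convolution br X Z"
    by (rule convolution_add_right) (rule additive_br_right)
  show "convolution br X Y = - convolution br Y X"
    by (rule convolution_anticomm) (rule br_anticomm)
  show "convolution \<rho> (X + Y) W = convolution \<rho> X W + convolution \<rho> Y W"
    by (rule convolution_add_left) (rule additive_action_left)
  show "convolution \<rho> X (W + W') = convolution \<rho> X W + convolution \<rho> X W'"
    by (rule convolution_add_right) (rule additive_action_right)
  show "convolution br X (convolution br Y Z) + convolution br Y (convolution br Z X)
      + convolution br Z (convolution br X Y) = 0"
  proof (rule ext)
    fix k
    have "triangle_sum k (\<lambda>i j l. br (Y i) (br (Z j) (X l)))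
        = triangle_sum k (\<lambda>i j l. br (Y j) (br (Z l) (X i)))"
      using triangle_sum_rotate[of k "\<lambda>i j l. br (Y i) (br (Z j) (X l))"]
        triangle_sum_rotate[of k "\<lambda>i j l. br (Y l) (br (Z i) (X j))"] by simp
    moreover have "triangle_sum k (\<lambda>i j l. br (Z i) (br (X j) (Y l)))
        = triangle_sum k (\<lambda>i j l. br (Z l) (br (X i) (Y j)))"
      by (rule triangle_sum_rotate)
    ultimately show "(convolution br X (convolution br Y Z) + convolution br Y (convolution br Z X)
        + convolution br Z (convolution br X Y)) k = 0 k"
      by (simp add: convolution_convolution_right[OF additive_br_right] triangle_sum_add jacobi)
        (simp add: triangle_sum_def)
  qed
  show "convolution \<rho> (convolution br X Y) W
      = convolution \<rho> X (convolution \<rho> Y W) - convolution \<rho> Y (convolution \<rho> X W)"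
  proof (rule ext)
    fix k
    have "triangle_sum k (\<lambda>i j l. \<rho> (Y i) (\<rho> (X j) (W l)))
        = triangle_sum k (\<lambda>i j l. \<rho> (Y j) (\<rho> (X i) (W l)))"
      by (rule triangle_sum_swap)
    then show "convolution \<rho> (convolution br X Y) W k
        = (convolution \<rho> X (convolution \<rho> Y W) - convolution \<rho> Y (convolution \<rho> X W)) k"
      by (simp add: convolution_convolution_left[OF additive_action_left]
          convolution_convolution_right[OF additive_action_right] triangle_sum_diff action_bracket)
  qed
qed

definition O_defect ::
  "('g::ab_group_add \<Rightarrow> 'g \<Rightarrow> 'g) \<Rightarrow> ('g \<Rightarrow> 'v::ab_group_add \<Rightarrow> 'v) \<Rightarrow> ('v \<Rightarrow> 'g) \<Rightarrow>
    'v \<Rightarrow> 'v \<Rightarrow> 'g"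
  where "O_defect br \<rho> A u v = br (A u) (A v) - A (T_bracket \<rho> A u v)"

lemma (in lie_ring_module) coboundary2_O_defect:
  assumes "additive A"
  shows "coboundary2 br \<rho> A (O_defect br \<rho> A) u1 u2 u3 = 0"
proof -
  have jacobi': "br (A u3) (br (A u1) (A u2))
      = - br (A u1) (br (A u2) (A u3)) - br (A u2) (br (A u3) (A u1))"
    using jacobi[of "A u1" "A u2" "A u3"] by (simp add: algebra_simps eq_neg_iff_add_eq_0)
  show ?thesis
    unfolding coboundary2_def O_defect_def T_bracket_def
    by (simp add: additive.add[OF assms] additive.diff[OF assms] br_add_left br_add_right
        br_diff_left br_diff_right br_minus_left br_minus_right additive.minus[OF assms]
        action_add_left action_add_right action_diff_left action_diff_right action_bracket jacobi' br_anticomm[of "A (\<rho> _ _)"] br_anticomm[of "A u3" "A u1"] algebra_simps)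
qed

definition deformation_defect ::
  "('g::ab_group_add \<Rightarrow> 'g \<Rightarrow> 'g) \<Rightarrow> ('g \<Rightarrow> 'v::ab_group_add \<Rightarrow> 'v) \<Rightarrow> (nat \<Rightarrow> 'v \<Rightarrow> 'g) \<Rightarrow>
    nat \<Rightarrow> 'v \<Rightarrow> 'v \<Rightarrow> 'g"
  where "deformation_defect br \<rho> \<tau> k u v =
    (\<Sum>i\<le>k. br (\<tau> i u) (\<tau> (k - i) v) - \<tau> i (\<rho> (\<tau> (k - i) u) v - \<rho> (\<tau> (k - i) v) u))"

context lie_ring_module
begin

lemma O_defect_series_const_right:
  assumes \<tau>: "\<And>i. additive (\<tau> i)"
  defines "A \<equiv> convolution (\<lambda>f. f) \<tau>"
  shows "O_defect (convolution br) (convolution \<rho>) A X (const_series w)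
    = convolution (\<lambda>x \<Phi>. \<Phi> x w) X (deformation_defect br \<rho> \<tau>)"
proof (rule ext)
  fix k
  have additive_A: "additive A"
    unfolding A_def by (rule additive_convolution) (simp add: \<tau>)
  have A_const: "A (const_series w) = (\<lambda>l. \<tau> l w)"
    unfolding A_def by (rule convolution_const_series_right) (simp add: additive.zero[OF \<tau>])
  have bracket_part: "convolution br (A X) (A (const_series w)) k
      = triangle_sum k (\<lambda>i j l. br (\<tau> i (X j)) (\<tau> l w))"
    unfolding A_const unfolding A_def by (rule convolution_convolution_left) (rule additive_br_left)
  have "convolution \<rho> (A X) (const_series w) = convolution (\<lambda>f x. \<rho> (f x) w) \<tau> X"
    unfolding convolution_const_series_right[where f=\<rho>, OF action_zero_right]
    unfolding A_def convolution_def by (rule ext) (rule additive.sum[OF additive_action_left])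
  then have action_part1: "A (convolution \<rho> (A X) (const_series w)) k
      = triangle_sum k (\<lambda>i j l. \<tau> i (\<rho> (\<tau> j (X l)) w))"
    unfolding A_def by (simp add: convolution_convolution_right \<tau>)
  have action_part2: "A (convolution \<rho> (A (const_series w)) X) k
      = triangle_sum k (\<lambda>i j l. \<tau> i (\<rho> (\<tau> j w) (X l)))"
    unfolding A_const unfolding A_def by (simp add: convolution_convolution_right \<tau>)
  have "O_defect (convolution br) (convolution \<rho>) A X (const_series w) k
      = triangle_sum k (\<lambda>i j l. br (\<tau> i (X j)) (\<tau> l w))
        - (triangle_sum k (\<lambda>i j l. \<tau> i (\<rho> (\<tau> j (X l)) w))
           - triangle_sum k (\<lambda>i j l. \<tau> i (\<rho> (\<tau> j w) (X l))))"
    using bracket_part action_part1 action_part2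
    by (simp add: O_defect_def T_bracket_def additive.diff[OF additive_A])
  also have "\<dots> = triangle_sum k (\<lambda>p i j. br (\<tau> i (X p)) (\<tau> j w)
      - (\<tau> i (\<rho> (\<tau> j (X p)) w) - \<tau> i (\<rho> (\<tau> j w) (X p))))"
    using triangle_sum_swap[where k=k and H="\<lambda>p i j. br (\<tau> i (X p)) (\<tau> j w)", symmetric]
      triangle_sum_rotate[where k=k and H="\<lambda>p i j. \<tau> i (\<rho> (\<tau> j (X p)) w)", symmetric]
      triangle_sum_rotate[where k=k and H="\<lambda>p i j. \<tau> i (\<rho> (\<tau> j w) (X p))", symmetric]
    by (simp add: triangle_sum_diff)
  also have "\<dots> = convolution (\<lambda>x \<Phi>. \<Phi> x w) X (deformation_defect br \<rho> \<tau>) k"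
    unfolding convolution_def deformation_defect_def triangle_sum_nested_left[symmetric]
    by (simp add: additive.diff[OF \<tau>])
  finally show "O_defect (convolution br) (convolution \<rho>) A X (const_series w) k
    = convolution (\<lambda>x \<Phi>. \<Phi> x w) X (deformation_defect br \<rho> \<tau>) k" .
qed

lemma deformation_defect_zero_left:
  assumes "\<And>i. additive (\<tau> i)"
  shows "deformation_defect br \<rho> \<tau> k 0 w = 0"
  by (simp add: deformation_defect_def additive.zero[OF assms] additive.diff[OF assms]
      br_zero_left action_zero_left action_zero_right)

lemma O_defect_series_const:
  assumes "\<And>i. additive (\<tau> i)"
  shows "O_defect (convolution br) (convolution \<rho>) (convolution (\<lambda>f. f) \<tau>) (const_series v) (const_series w)
    = (\<lambda>k. deformation_defect br \<rho> \<tau> k v w)"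
  unfolding O_defect_series_const_right[OF assms]
  by (rule convolution_const_series_left) (simp add: deformation_defect_zero_left[OF assms])

lemma coboundary2_first_deformation_defect:
  assumes \<tau>: "\<And>i. additive (\<tau> i)"
    and lower: "\<And>k. k < m \<Longrightarrow> deformation_defect br \<rho> \<tau> k = 0"
  shows "coboundary2 br \<rho> (\<tau> 0) (deformation_defect br \<rho> \<tau> m) u1 u2 u3 = 0"
proof -
  define A where "A = convolution (\<lambda>f. f) \<tau>"
  define D where "D = O_defect (convolution br) (convolution \<rho>) A"
  define E where "E = deformation_defect br \<rho> \<tau>"
  have additive_A: "additive A"
    unfolding A_def by (rule additive_convolution) (simp add: \<tau>)
  have A_const: "A (const_series a) = (\<lambda>k. \<tau> k a)" for a
    unfolding A_def by (rule convolution_const_series_right) (simp add: additive.zero[OF \<tau>])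
  have D_const: "D (const_series b) (const_series c) = (\<lambda>k. E k b c)" for b c
    unfolding D_def A_def E_def by (rule O_defect_series_const[OF \<tau>])
  have E_lower: "E k = 0" if "k < m" for k
    using lower[OF that] by (simp add: E_def)
  have bracket_term: "convolution br (A (const_series a)) (D (const_series b) (const_series c)) m
      = br (\<tau> 0 a) (E m b c)" for a b c
    unfolding A_const D_const
    by (rule convolution_vanishing_below) (simp_all add: E_lower br_zero_right)
  have action_term: "A (convolution \<rho> (D (const_series b) (const_series c)) (const_series a)) m
      = \<tau> 0 (\<rho> (E m b c) a)" for a b c
    unfolding D_const convolution_const_series_right[where f=\<rho>, OF action_zero_right] A_def
    by (rule convolution_vanishing_below) (simp_all add: E_lower action_zero_left additive.zero[OF \<tau>])
  have bracket_const: "T_bracket (convolution \<rho>) A (const_series a) (const_series b) 0 = T_bracket \<rho> (\<tau> 0) a b"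
    for a b
    unfolding T_bracket_def A_const convolution_const_series_right[where f=\<rho>, OF action_zero_right]
    by simp
  have defect_term: "D (T_bracket (convolution \<rho>) A (const_series a) (const_series b)) (const_series c) m
      = E m (T_bracket \<rho> (\<tau> 0) a b) c" for a b c
    unfolding D_def A_def O_defect_series_const_right[OF \<tau>] E_def[symmetric]
    by (subst convolution_vanishing_below) (simp_all add: E_lower A_def[symmetric] bracket_const)
  have "coboundary2 (convolution br) (convolution \<rho>) A D
      (const_series u1) (const_series u2) (const_series u3) = 0"
    unfolding D_def
    by (rule lie_ring_module.coboundary2_O_defect[OF lie_ring_module_convolution additive_A])
  then have "coboundary2 (convolution br) (convolution \<rho>) A D
      (const_series u1) (const_series u2) (const_series u3) m = 0"
    by simp
  then show ?thesis
    unfolding coboundary2_def E_def[symmetric]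
    by (simp only: minus_apply plus_fun_apply bracket_term action_term defect_term)
qed

end

text \<open>\<open>order_deformation\<close> says nothing about \<open>\<tau> i\<close> for \<open>i > n\<close>; truncating makes every
  coefficient additive and turns the obstruction into the defect of order \<open>n + 1\<close>.\<close>

definition truncation :: "nat \<Rightarrow> (nat \<Rightarrow> 'a::zero) \<Rightarrow> nat \<Rightarrow> 'a"
  where "truncation n \<tau> i = (if i \<le> n then \<tau> i else 0)"

lemma deformation_defect_truncation:
  assumes "k \<le> n"
  shows "deformation_defect br \<rho> (truncation n \<tau>) k = deformation_defect br \<rho> \<tau> k"
  unfolding deformation_defect_def using assms
  by (intro ext sum.cong refl) (auto simp: truncation_def)

lemma (in lie_ring_module) deformation_defect_truncation_Suc:
  assumes "additive (\<tau> 0)"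
  shows "deformation_defect br \<rho> (truncation n \<tau>) (Suc n) = obstruction br \<rho> n \<tau>"
proof (intro ext)
  fix u v
  let ?term = "\<lambda>i. br (truncation n \<tau> i u) (truncation n \<tau> (Suc n - i) v)
    - truncation n \<tau> i (\<rho> (truncation n \<tau> (Suc n - i) u) v - \<rho> (truncation n \<tau> (Suc n - i) v) u)"
  have "{..Suc n} = insert 0 (insert (Suc n) {1..n})" by auto
  then have "deformation_defect br \<rho> (truncation n \<tau>) (Suc n) u v = ?term 0 + ?term (Suc n) + sum ?term {1..n}"
    by (simp add: deformation_defect_def add.assoc)
  moreover have "?term 0 = 0" "?term (Suc n) = 0"
    by (simp_all add: truncation_def br_zero_left br_zero_right action_zero_left additive.zero[OF assms])
  moreover have "sum ?term {1..n} = obstruction br \<rho> n \<tau> u v"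
    unfolding obstruction_def by (intro sum.cong refl) (auto simp: truncation_def)
  ultimately show "deformation_defect br \<rho> (truncation n \<tau>) (Suc n) u v = obstruction br \<rho> n \<tau> u v"
    by simp
qed

lemma order_deformation_defect_eq_0:
  assumes "order_deformation sg sv br \<rho> T n \<tau>" and "k \<le> n"
  shows "deformation_defect br \<rho> \<tau> k = 0"
  using assms unfolding order_deformation_def deformation_defect_def atMost_atLeast0 by (auto intro!: ext)

theorem proposition5p13:
  fixes sg :: "'k::field \<Rightarrow> 'g::ab_group_add \<Rightarrow> 'g"
    and sv :: "'k \<Rightarrow> 'v::ab_group_add \<Rightarrow> 'v"
    and br :: "'g \<Rightarrow> 'g \<Rightarrow> 'g" and \<rho> :: "'g \<Rightarrow> 'v \<Rightarrow> 'v"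
    and T :: "'v \<Rightarrow> 'g" and n :: nat and \<tau> :: "nat \<Rightarrow> 'v \<Rightarrow> 'g"
  assumes "lie_representation sg sv br \<rho>"
    and "O_operator sg sv br \<rho> T"
    and "order_deformation sg sv br \<rho> T n \<tau>"
  shows "\<forall>u1 u2 u3. coboundary2 br \<rho> T (obstruction br \<rho> n \<tau>) u1 u2 u3 = 0"
proof (intro allI)
  \<comment> \<open>The O-operator identity of \<open>T\<close> is the order-0 deformation equation.\<close>
  fix u1 u2 u3
  interpret lie_ring_module br \<rho>
    using assms(1) by (rule lie_representation_imp_lie_ring_module)
  have additive: "additive (truncation n \<tau> i)" for i
    using assms(3) unfolding order_deformation_def truncation_def Vector_Spaces.linear_iff
    by unfold_locales (simp add: zero_fun_def)
  have "deformation_defect br \<rho> (truncation n \<tau>) k = 0" if "k < Suc n" for k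
    using deformation_defect_truncation order_deformation_defect_eq_0[OF assms(3)] that
    by (metis less_Suc_eq_le)
  then have "coboundary2 br \<rho> (truncation n \<tau> 0)
      (deformation_defect br \<rho> (truncation n \<tau>) (Suc n)) u1 u2 u3 = 0"
    by (rule coboundary2_first_deformation_defect[OF additive])
  moreover have "truncation n \<tau> 0 = \<tau> 0" and "\<tau> 0 = T"
    using assms(3) by (simp_all add: truncation_def order_deformation_def)
  ultimately show "coboundary2 br \<rho> T (obstruction br \<rho> n \<tau>) u1 u2 u3 = 0"
    using deformation_defect_truncation_Suc additive[of 0] by simp
qed

end
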